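(* Let $(H_0,h_1,r)$ be a form bilinear quantum control system and let $S$ be a connectedness chain for $(H_0,h_1,r)$. For any approximating family $\{h_1^{(n)}\}_{n\in\mathbb{N}}$ there is an approximating family $\{\tilde h_1^{(n)}\}_{n\in\mathbb{N}}$ such that, for every $n$, $(H_0,\tilde h_1^{(n)},r)$ admits $S$ as a connectedness chain. Moreover, if $\{h_1^{(n)}\}$ is regular, then $\{\tilde h_1^{(n)}\}$ is also regular.
   Context: $\mathcal{H}$ complex separable Hilbert space; $H_0\ge0$ self-adjoint, closed form $h_0$ on form domain $\mathcal{H}^+$, $\|\Psi\|_+=\sqrt{h_0(\Psi,\Psi)+\|\Psi\|^2}$. A form bilinear quantum control system is a triple $(H_0,h_1,r)$: $H_0$ nonnegative self-adjoint with form domain $\mathcal{H}^+$; an orthonormal basis $\{\Phi_k\}$ of eigenvectors of $H_0$; $h_1$ a Hermitian form on $\mathcal{H}^+$ with $|h_1(\Phi,\Phi)|\le a h_0(\Phi,\Phi)+b\|\Phi\|^2$ ($a>0,b\ge0$); $r\in(0,1/a)$. A connectedness chain for a system with perturbation form $g$ is $S\subset\mathbb{N}^2$ such that for all $(j,\ell)$ there is a finite sequence $(j,s_1),(s_1,s_2),\dots,(s_k,\ell)\in S$ with $g(\Phi_j,\Phi_{s_1}),\dots,g(\Phi_{s_k},\Phi_\ell)$ all nonzero. An approximating family for $(H_0,h_1,r)$ is a sequence of $h_0$-bounded forms $h_1^{(n)}\ne h_1$ on $\mathcal{H}^+$ with $\sup_{\Psi,\Phi\ne0}|h_1(\Psi,\Phi)-h_1^{(n)}(\Psi,\Phi)|/(\|\Psi\|_+\|\Phi\|_+)\to0$;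 it is regular if there exist symmetric operators $H_1^{(n)}$ on $\mathcal{H}$, $\operatorname{dom}H_1^{(n)}\subset\mathcal{H}^+$, with $h_1^{(n)}(\Psi,\Phi)=\langle\Psi,H_1^{(n)}\Phi\rangle$ for $\Psi\in\mathcal{H}^+$, $\Phi\in\operatorname{dom}H_1^{(n)}$, all $\Phi_j\in\operatorname{dom}H_1^{(n)}$, and $H_0+uH_1^{(n)}$ essentially self-adjoint on $\operatorname{span}\{\Phi_j\}$ for every $u\in[0,r)$. *)

theory Defs
  imports "HOL-Analysis.Analysis"
begin

text \<open>Inner product is conjugate-linear in the first and linear in the second argument
  (physics convention, matching \<open>\<langle>\<Psi>, H \<Phi>\<rangle>\<close>).\<close>

class complex_inner = ab_group_add +
  fixes hscale :: "complex \<Rightarrow> 'a \<Rightarrow> 'a"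
  fixes cinner :: "'a \<Rightarrow> 'a \<Rightarrow> complex"
  assumes hscale_add_right: "hscale a (x + y) = hscale a x + hscale a y"
    and hscale_add_left: "hscale (a + b) x = hscale a x + hscale b x"
    and hscale_hscale: "hscale a (hscale b x) = hscale (a * b) x"
    and hscale_one: "hscale 1 x = x"
    and cinner_add_right: "cinner x (y + z) = cinner x y + cinner x z"
    and cinner_hscale_right: "cinner x (hscale a y) = a * cinner x y"
    and cinner_commute: "cinner y x = cnj (cinner x y)"
    and cinner_self_nonneg: "0 \<le> Re (cinner x x)"
    and cinner_self_eq_zero: "cinner x x = 0 \<longleftrightarrow> x = 0"

class chilbert = complex_inner +
  assumes hcomplete:
    "(\<forall>e>0. \<exists>N::nat. \<forall>m\<ge>N. \<forall>n\<ge>N. Re (cinner ((X::nat \<Rightarrow> 'a) m - X n) (X m - X n)) < e)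
      \<Longrightarrow> \<exists>x. \<forall>e>0. \<exists>N. \<forall>n\<ge>N. Re (cinner (X n - x) (X n - x)) < e"
  assumes hseparable:
    "\<exists>D::nat \<Rightarrow> 'a. \<forall>x. \<forall>e>0. \<exists>n. Re (cinner (x - D n) (x - D n)) < e"

definition hnorm :: "'h::chilbert \<Rightarrow> real" where
  "hnorm x = sqrt (Re (cinner x x))"

definition hconverges :: "(nat \<Rightarrow> 'h::chilbert) \<Rightarrow> 'h \<Rightarrow> bool" where
  "hconverges X x \<longleftrightarrow> (\<lambda>n. hnorm (X n - x)) \<longlonglongrightarrow> 0"

definition hdense :: "'h::chilbert set \<Rightarrow> bool" where
  "hdense V \<longleftrightarrow> (\<forall>x. \<forall>e>0. \<exists>v\<in>V. hnorm (x - v) < e)"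

definition csubspace :: "'h::chilbert set \<Rightarrow> bool" where
  "csubspace V \<longleftrightarrow> 0 \<in> V \<and> (\<forall>x\<in>V. \<forall>y\<in>V. x + y \<in> V) \<and> (\<forall>c. \<forall>x\<in>V. hscale c x \<in> V)"

definition cspan :: "(nat \<Rightarrow> 'h::chilbert) \<Rightarrow> 'h set" where
  "cspan \<Phi> = {x. \<exists>n c. x = (\<Sum>k<n. hscale (c k) (\<Phi> k))}"

section \<open>Unbounded operators, given by a domain \<open>D\<close> and an action \<open>T\<close> on \<open>D\<close>\<close>

definition linear_op :: "'h::chilbert set \<Rightarrow> ('h \<Rightarrow> 'h) \<Rightarrow> bool" where
  "linear_op D T \<longleftrightarrow> csubspace D \<and>
     (\<forall>x\<in>D. \<forall>y\<in>D. T (x + y) = T x + T y) \<and> (\<forall>c. \<forall>x\<in>D. T (hscale c x) = hscale c (T x))"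

definition symmetric_op :: "'h::chilbert set \<Rightarrow> ('h \<Rightarrow> 'h) \<Rightarrow> bool" where
  "symmetric_op D T \<longleftrightarrow> linear_op D T \<and> hdense D \<and>
     (\<forall>x\<in>D. \<forall>y\<in>D. cinner x (T y) = cinner (T x) y)"

definition adj_dom :: "'h::chilbert set \<Rightarrow> ('h \<Rightarrow> 'h) \<Rightarrow> 'h set" where
  "adj_dom D T = {y. \<exists>z. \<forall>x\<in>D. cinner y (T x) = cinner z x}"

text \<open>For a symmetric operator \<open>T \<subseteq> T*\<close>, so \<open>T = T*\<close> iff \<open>dom T* \<subseteq> dom T\<close>.\<close>
definition self_adjoint :: "'h::chilbert set \<Rightarrow> ('h \<Rightarrow> 'h) \<Rightarrow> bool" where
  "self_adjoint D T \<longleftrightarrow> symmetric_op D T \<and> adj_dom D T \<subseteq> D"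

definition nonneg_op :: "'h::chilbert set \<Rightarrow> ('h \<Rightarrow> 'h) \<Rightarrow> bool" where
  "nonneg_op D T \<longleftrightarrow> (\<forall>x\<in>D. 0 \<le> Re (cinner x (T x)))"

definition op_closure_graph :: "'h::chilbert set \<Rightarrow> ('h \<Rightarrow> 'h) \<Rightarrow> ('h \<times> 'h) set" where
  "op_closure_graph D T = {(x, y). \<exists>X. (\<forall>n. X n \<in> D) \<and> hconverges X x \<and> hconverges (\<lambda>n. T (X n)) y}"

definition op_closure_dom :: "'h::chilbert set \<Rightarrow> ('h \<Rightarrow> 'h) \<Rightarrow> 'h set" where
  "op_closure_dom D T = fst ` op_closure_graph D T"

definition op_closure_map :: "'h::chilbert set \<Rightarrow> ('h \<Rightarrow> 'h) \<Rightarrow> 'h \<Rightarrow> 'h" where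
  "op_closure_map D T x = (SOME y. (x, y) \<in> op_closure_graph D T)"

definition ess_self_adjoint :: "'h::chilbert set \<Rightarrow> ('h \<Rightarrow> 'h) \<Rightarrow> bool" where
  "ess_self_adjoint D T \<longleftrightarrow> symmetric_op D T \<and>
     self_adjoint (op_closure_dom D T) (op_closure_map D T)"

definition sesq_form :: "'h::chilbert set \<Rightarrow> ('h \<Rightarrow> 'h \<Rightarrow> complex) \<Rightarrow> bool" where
  "sesq_form V q \<longleftrightarrow> csubspace V \<and>
     (\<forall>x\<in>V. \<forall>y\<in>V. \<forall>z\<in>V. q x (y + z) = q x y + q x z \<and> q (x + y) z = q x z + q y z) \<and>
     (\<forall>c. \<forall>x\<in>V. \<forall>y\<in>V. q x (hscale c y) = c * q x y \<and> q (hscale c x) y = cnj c * q x y)"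

definition hermitian_form :: "'h::chilbert set \<Rightarrow> ('h \<Rightarrow> 'h \<Rightarrow> complex) \<Rightarrow> bool" where
  "hermitian_form V q \<longleftrightarrow> sesq_form V q \<and> (\<forall>x\<in>V. \<forall>y\<in>V. q y x = cnj (q x y))"

definition plus_norm :: "('h::chilbert \<Rightarrow> 'h \<Rightarrow> complex) \<Rightarrow> 'h \<Rightarrow> real" where
  "plus_norm h0 x = sqrt (Re (h0 x x) + (hnorm x)\<^sup>2)"

definition closed_nonneg_form :: "'h::chilbert set \<Rightarrow> ('h \<Rightarrow> 'h \<Rightarrow> complex) \<Rightarrow> bool" where
  "closed_nonneg_form V h0 \<longleftrightarrow> hermitian_form V h0 \<and> hdense V \<and> (\<forall>x\<in>V. 0 \<le> Re (h0 x x)) \<and>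
     (\<forall>X. (\<forall>n. X n \<in> V) \<and>
          (\<forall>e>0. \<exists>N. \<forall>m\<ge>N. \<forall>n\<ge>N. plus_norm h0 (X m - X n) < e) \<longrightarrow>
          (\<exists>x\<in>V. (\<lambda>n. plus_norm h0 (X n - x)) \<longlonglongrightarrow> 0))"

text \<open>\<open>(D, T)\<close> is the operator associated with the closed form \<open>h0\<close> on \<open>V\<close>
  (Kato's first representation theorem); i.e. \<open>V\<close> is the form domain of \<open>T\<close> and
  \<open>h0\<close> its closed form.\<close>
definition form_operator :: "'h::chilbert set \<Rightarrow> ('h \<Rightarrow> 'h \<Rightarrow> complex) \<Rightarrow> 'h set \<Rightarrow> ('h \<Rightarrow> 'h) \<Rightarrow> bool" where
  "form_operator V h0 D T \<longleftrightarrow>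
     (\<forall>x. x \<in> D \<longleftrightarrow> x \<in> V \<and> (\<exists>z. \<forall>y\<in>V. h0 y x = cinner y z)) \<and>
     (\<forall>x\<in>D. \<forall>y\<in>V. h0 y x = cinner y (T x))"

definition orthonormal_basis :: "(nat \<Rightarrow> 'h::chilbert) \<Rightarrow> bool" where
  "orthonormal_basis \<Phi> \<longleftrightarrow> (\<forall>j k. cinner (\<Phi> j) (\<Phi> k) = (if j = k then 1 else 0)) \<and>
     (\<forall>x. (\<forall>k. cinner (\<Phi> k) x = 0) \<longrightarrow> x = 0)"

definition eigenbasis :: "'h::chilbert set \<Rightarrow> ('h \<Rightarrow> 'h) \<Rightarrow> (nat \<Rightarrow> 'h) \<Rightarrow> bool" where
  "eigenbasis D T \<Phi> \<longleftrightarrow> orthonormal_basis \<Phi> \<and>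
     (\<forall>k. \<Phi> k \<in> D \<and> (\<exists>ev. T (\<Phi> k) = hscale ev (\<Phi> k)))"

text \<open>The system \<open>(H_0, h_1, r)\<close>, with \<open>H_0 = (D0, T0)\<close>, form domain \<open>Hp\<close>, closed form
  \<open>h0\<close> and eigenbasis \<open>\<Phi>\<close>.\<close>
definition form_bilinear_system ::
  "'h::chilbert set \<Rightarrow> ('h \<Rightarrow> 'h) \<Rightarrow> (nat \<Rightarrow> 'h) \<Rightarrow> 'h set \<Rightarrow> ('h \<Rightarrow> 'h \<Rightarrow> complex)
    \<Rightarrow> ('h \<Rightarrow> 'h \<Rightarrow> complex) \<Rightarrow> real \<Rightarrow> bool" where
  "form_bilinear_system D0 T0 \<Phi> Hp h0 h1 r \<longleftrightarrow>
     self_adjoint D0 T0 \<and> nonneg_op D0 T0 \<and>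
     closed_nonneg_form Hp h0 \<and> form_operator Hp h0 D0 T0 \<and>
     eigenbasis D0 T0 \<Phi> \<and>
     hermitian_form Hp h1 \<and>
     (\<exists>a b. a > 0 \<and> b \<ge> 0 \<and>
        (\<forall>x\<in>Hp. cmod (h1 x x) \<le> a * Re (h0 x x) + b * (hnorm x)\<^sup>2) \<and>
        0 < r \<and> r < 1 / a)"

text \<open>Connectedness chain for perturbation form \<open>g\<close> (relative to the basis \<open>\<Phi>\<close>).
  The path \<open>p 0 = j, p 1 = s_1, ..., p k = s_k, p (k+1) = l\<close>.\<close>
definition connectedness_chain :: "(nat \<Rightarrow> 'h::chilbert) \<Rightarrow> ('h \<Rightarrow> 'h \<Rightarrow> complex) \<Rightarrow> (nat \<times> nat) set \<Rightarrow> bool" where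
  "connectedness_chain \<Phi> g S \<longleftrightarrow>
     (\<forall>j l. \<exists>k p. p 0 = j \<and> p (Suc k) = l \<and>
        (\<forall>i\<le>k. (p i, p (Suc i)) \<in> S \<and> g (\<Phi> (p i)) (\<Phi> (p (Suc i))) \<noteq> 0))"

definition h0_bounded_form :: "'h::chilbert set \<Rightarrow> ('h \<Rightarrow> 'h \<Rightarrow> complex) \<Rightarrow> ('h \<Rightarrow> 'h \<Rightarrow> complex) \<Rightarrow> bool" where
  "h0_bounded_form Hp h0 h \<longleftrightarrow> sesq_form Hp h \<and>
     (\<exists>a b. a \<ge> 0 \<and> b \<ge> 0 \<and> (\<forall>x\<in>Hp. cmod (h x x) \<le> a * Re (h0 x x) + b * (hnorm x)\<^sup>2))"

text \<open>Approximating family; the condition "sup ... \<rightarrow> 0" is written out with \<open>\<epsilon>\<close>.\<close>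
definition approximating_family ::
  "'h::chilbert set \<Rightarrow> ('h \<Rightarrow> 'h \<Rightarrow> complex) \<Rightarrow> ('h \<Rightarrow> 'h \<Rightarrow> complex)
    \<Rightarrow> (nat \<Rightarrow> 'h \<Rightarrow> 'h \<Rightarrow> complex) \<Rightarrow> bool" where
  "approximating_family Hp h0 h1 hn \<longleftrightarrow>
     (\<forall>n. h0_bounded_form Hp h0 (hn n) \<and> (\<exists>x\<in>Hp. \<exists>y\<in>Hp. hn n x y \<noteq> h1 x y)) \<and>
     (\<forall>e>0. \<exists>N. \<forall>n\<ge>N. \<forall>x\<in>Hp - {0}. \<forall>y\<in>Hp - {0}.
        cmod (h1 x y - hn n x y) / (plus_norm h0 x * plus_norm h0 y) \<le> e)"

definition regular_family ::
  "'h::chilbert set \<Rightarrow> ('h \<Rightarrow> 'h) \<Rightarrow> (nat \<Rightarrow> 'h) \<Rightarrow> 'h set \<Rightarrow> real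
    \<Rightarrow> (nat \<Rightarrow> 'h \<Rightarrow> 'h \<Rightarrow> complex) \<Rightarrow> bool" where
  "regular_family D0 T0 \<Phi> Hp r hn \<longleftrightarrow>
     (\<exists>D T. \<forall>n. symmetric_op (D n) (T n) \<and> D n \<subseteq> Hp \<and>
        (\<forall>x\<in>Hp. \<forall>y\<in>D n. hn n x y = cinner x (T n y)) \<and>
        (\<forall>j. \<Phi> j \<in> D n) \<and>
        (\<forall>u. 0 \<le> u \<and> u < r \<longrightarrow>
           ess_self_adjoint (cspan \<Phi>) (\<lambda>x. T0 x + hscale (complex_of_real u) (T n x))))"

end

theory Submission
  imports Defs
begin

text \<open>
  Write \<open>h\<^sub>n\<close>, \<open>H\<^sub>n\<close> for the approximating forms and their operators. Put
  \<open>v = \<Sum>\<^sub>k 2^-k \<Phi>\<^sub>k\<close> and \<open>p(x, y) = \<langle>x, v\<rangle> \<langle>v, y\<rangle>\<close>, so that every matrix element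
  \<open>p(\<Phi>\<^sub>j, \<Phi>\<^sub>l) = 2^-(j+l)\<close> is nonzero. For fixed \<open>n\<close>, each of the countably many equations
  \<open>(h\<^sub>n + \<epsilon> p)(\<Phi>\<^sub>j, \<Phi>\<^sub>l) = 0\<close>, and the equation \<open>(h\<^sub>n + \<epsilon> p)(x, y) = h\<^sub>1(x, y)\<close> at a pair
  where \<open>h\<^sub>n\<close> and \<open>h\<^sub>1\<close> differ, has at most one real solution \<open>\<epsilon>\<close>; so some
  \<open>\<epsilon>\<^sub>n \<in> (0, 1/(n+1))\<close> solves none of them. The forms \<open>h\<^sub>n + \<epsilon>\<^sub>n p\<close> then have no vanishing
  matrix elements, so every connectedness chain of \<open>h\<^sub>1\<close> is one for them; they still
  approximate \<open>h\<^sub>1\<close> because \<open>|\<epsilon>\<^sub>n p(x, y)| \<le> \<epsilon>\<^sub>n \<parallel>v\<parallel>\<^sup>2 \<parallel>x\<parallel> \<parallel>y\<parallel>\<close>; and their operators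
  \<open>H\<^sub>n + \<epsilon>\<^sub>n |v\<rangle>\<langle>v|\<close> differ from the old ones by a bounded symmetric operator, which
  preserves essential self-adjointness of \<open>H\<^sub>0 + u H\<^sub>n\<close>.
\<close>

subsection \<open>Inner product calculus\<close>

lemma hscale_zero_right [simp]: "hscale a (0::'h::chilbert) = 0"
  using hscale_add_right[of a "0::'h" 0] by simp

lemma hscale_zero_left [simp]: "hscale 0 (x::'h::chilbert) = 0"
  using hscale_add_left[of 0 0 x] by simp

lemma hscale_minus_left: "hscale (- a) (x::'h::chilbert) = - hscale a x"
proof -
  have "hscale a x + hscale (- a) x = 0"
    using hscale_add_left[of a "- a" x] by simp
  then show ?thesis
    by (rule minus_unique[symmetric])
qed

lemma hscale_diff_left: "hscale (a - b) (x::'h::chilbert) = hscale a x - hscale b x"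
  by (simp only: diff_conv_add_uminus hscale_add_left hscale_minus_left)

lemma cinner_zero_right [simp]: "cinner x (0::'h::chilbert) = 0"
  using cinner_add_right[of x "0::'h" 0] by simp

lemma cinner_zero_left [simp]: "cinner (0::'h::chilbert) x = 0"
  using cinner_commute[of 0 x] by simp

lemma cinner_add_left: "cinner (x + y) (z::'h::chilbert) = cinner x z + cinner y z"
  using cinner_commute[of "x + y" z] cinner_commute[of x z] cinner_commute[of y z]
  by (simp add: cinner_add_right)

lemma cinner_minus_right: "cinner x (- y::'h::chilbert) = - cinner x y"
proof -
  have "cinner x y + cinner x (- y) = 0"
    using cinner_add_right[of x y "- y"] by simp
  then show ?thesis
    by (rule minus_unique[symmetric])
qed

lemma cinner_minus_left: "cinner (- x) (y::'h::chilbert) = - cinner x y"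
  using cinner_commute[of "- x" y] cinner_commute[of x y] by (simp add: cinner_minus_right)

lemma cinner_diff_right: "cinner x (y - z::'h::chilbert) = cinner x y - cinner x z"
  by (simp only: diff_conv_add_uminus cinner_add_right cinner_minus_right)

lemma cinner_diff_left: "cinner (x - y) (z::'h::chilbert) = cinner x z - cinner y z"
  by (simp only: diff_conv_add_uminus cinner_add_left cinner_minus_left)

lemma cinner_hscale_left: "cinner (hscale a x) (y::'h::chilbert) = cnj a * cinner x y"
  using cinner_commute[of "hscale a x" y] cinner_commute[of x y] by (simp add: cinner_hscale_right)

lemma cinner_sum_right: "cinner x (\<Sum>k\<in>A. f k) = (\<Sum>k\<in>A. cinner (x::'h::chilbert) (f k))"
  by (induction A rule: infinite_finite_induct) (simp_all add: cinner_add_right)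

lemma cinner_sum_left: "cinner (\<Sum>k\<in>A. f k) x = (\<Sum>k\<in>A. cinner (f k) (x::'h::chilbert))"
  by (induction A rule: infinite_finite_induct) (simp_all add: cinner_add_left)

lemma cinner_self_real: "cinner x (x::'h::chilbert) = complex_of_real (Re (cinner x x))"
proof -
  have "Im (cinner x x) = Im (cnj (cinner x x))"
    by (subst cinner_commute) (rule refl)
  then show ?thesis
    by (simp add: complex_eq_iff)
qed

lemma hnorm_sq: "(hnorm (x::'h::chilbert))\<^sup>2 = Re (cinner x x)"
  by (simp add: hnorm_def cinner_self_nonneg)

lemma hnorm_nonneg [simp]: "0 \<le> hnorm (x::'h::chilbert)"
  by (simp add: hnorm_def cinner_self_nonneg)

lemma hnorm_eq_zero_iff [simp]: "hnorm (x::'h::chilbert) = 0 \<longleftrightarrow> x = 0"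
  by (metis cinner_self_eq_zero cinner_self_real hnorm_def of_real_0 real_sqrt_eq_zero_cancel_iff
      zero_complex.sel(1))

lemma hnorm_pos: "(x::'h::chilbert) \<noteq> 0 \<Longrightarrow> 0 < hnorm x"
  using hnorm_nonneg[of x] hnorm_eq_zero_iff[of x] by linarith

lemma hnorm_hscale: "hnorm (hscale a (x::'h::chilbert)) = cmod a * hnorm x"
proof -
  have "cinner (hscale a x) (hscale a x) = (cnj a * a) * cinner x x"
    by (simp add: cinner_hscale_left cinner_hscale_right mult_ac)
  also have "cnj a * a = complex_of_real ((cmod a)\<^sup>2)"
    by (metis complex_norm_square mult.commute)
  finally have "cinner (hscale a x) (hscale a x) = complex_of_real ((cmod a)\<^sup>2) * cinner x x" .
  then show ?thesis
    by (simp add: hnorm_def real_sqrt_mult)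
qed

lemma hnorm_minus_commute: "hnorm (x - y::'h::chilbert) = hnorm (y - x)"
  using cinner_minus_left[of "y - x" "- (y - x)"] cinner_minus_right[of "y - x" "y - x"]
  by (simp add: hnorm_def)

lemma hnorm_less_iff:
  assumes "0 < e"
  shows "hnorm (x::'h::chilbert) < e \<longleftrightarrow> Re (cinner x x) < e\<^sup>2"
proof -
  have "e\<^sup>2 \<le> (hnorm x)\<^sup>2 \<longleftrightarrow> e \<le> hnorm x"
    using assms by simp
  then show ?thesis
    unfolding hnorm_sq by (meson not_le)
qed

lemma cauchy_schwarz_sq: "(cmod (cinner x (y::'h::chilbert)))\<^sup>2 \<le> Re (cinner x x) * Re (cinner y y)"
proof (cases "y = 0")
  case True
  then show ?thesis by simp
next
  case False
  define p where "p = Re (cinner y y)"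
  have yy: "cinner y y = complex_of_real p"
    using cinner_self_real p_def by blast
  have p: "p > 0"
    using hnorm_pos[OF False] hnorm_sq[of y] unfolding p_def by (metis zero_less_power)
  txt \<open>Expand \<open>0 \<le> \<parallel>x - t y\<parallel>\<^sup>2\<close> at the minimising \<open>t = \<langle>y, x\<rangle> / \<parallel>y\<parallel>\<^sup>2\<close>.\<close>
  define t where "t = cinner y x / complex_of_real p"
  define w where "w = x - hscale t y"
  have "cinner w w = cinner x x - t * cinner x y - cnj t * cinner y x + cnj t * t * cinner y y"
    unfolding w_def
    by (simp add: cinner_diff_left cinner_diff_right cinner_hscale_left cinner_hscale_right
        algebra_simps)
  also have "cnj t * t * cinner y y = cnj t * cinner y x"
    using p by (simp add: t_def yy)
  also have "t * cinner x y = complex_of_real ((cmod (cinner x y))\<^sup>2 / p)"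
  proof -
    have "cinner y x * cinner x y = complex_of_real ((cmod (cinner x y))\<^sup>2)"
      using complex_norm_square[of "cinner x y"] cinner_commute[of y x] by (simp only: mult.commute)
    then show ?thesis
      by (simp add: t_def)
  qed
  finally have "0 \<le> Re (cinner x x) - (cmod (cinner x y))\<^sup>2 / p"
    using cinner_self_nonneg[of w] by simp
  then show ?thesis
    using p by (simp add: p_def field_simps)
qed

lemma cauchy_schwarz: "cmod (cinner x (y::'h::chilbert)) \<le> hnorm x * hnorm y"
proof -
  have "(cmod (cinner x y))\<^sup>2 \<le> (hnorm x * hnorm y)\<^sup>2"
    using cauchy_schwarz_sq[of x y] by (simp add: power_mult_distrib hnorm_sq)
  then show ?thesis
    by (meson hnorm_nonneg mult_nonneg_nonneg power2_le_imp_le)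
qed

lemma hnorm_triangle: "hnorm (x + y::'h::chilbert) \<le> hnorm x + hnorm y"
proof -
  have "Re (cinner (x + y) (x + y)) = Re (cinner x x) + Re (cinner y y) + Re (cinner x y) + Re (cinner y x)"
    by (simp add: cinner_add_left cinner_add_right)
  also have "Re (cinner x y) \<le> hnorm x * hnorm y"
    using cauchy_schwarz[of x y] complex_Re_le_cmod order_trans by blast
  also have "Re (cinner y x) \<le> hnorm x * hnorm y"
    using cauchy_schwarz[of y x] complex_Re_le_cmod[of "cinner y x"] by (simp add: mult.commute)
  finally have "(hnorm (x + y))\<^sup>2 \<le> (hnorm x + hnorm y)\<^sup>2"
    by (simp add: hnorm_sq[symmetric] power2_sum)
  then show ?thesis
    by (meson add_nonneg_nonneg hnorm_nonneg power2_le_imp_le)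
qed

lemma hdense_orthogonal_eq_zero:
  assumes "hdense D" and "\<And>z. z \<in> D \<Longrightarrow> cinner z w = 0"
  shows "(w::'h::chilbert) = 0"
proof (rule ccontr)
  assume "w \<noteq> 0"
  then have w: "hnorm w > 0"
    by (rule hnorm_pos)
  then obtain z where z: "z \<in> D" "hnorm (w - z) < hnorm w"
    using assms(1) unfolding hdense_def by blast
  have "cinner w w = cinner (w - z) w"
    using assms(2)[OF z(1)] by (simp add: cinner_diff_left)
  then have "(hnorm w)\<^sup>2 = cmod (cinner (w - z) w)"
    by (metis cinner_self_real cinner_self_nonneg hnorm_sq norm_of_real abs_of_nonneg)
  also have "\<dots> \<le> hnorm (w - z) * hnorm w"
    by (rule cauchy_schwarz)
  also have "\<dots> < (hnorm w)\<^sup>2"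
    using z(2) w by (simp add: power2_eq_square)
  finally show False
    by simp
qed

subsection \<open>Convergence and completeness\<close>

lemma hconverges_add:
  assumes "hconverges X (x::'h::chilbert)" and "hconverges Y y"
  shows "hconverges (\<lambda>n. X n + Y n) (x + y)"
  unfolding hconverges_def
proof (rule Lim_null_comparison)
  have "hnorm (X n + Y n - (x + y)) \<le> hnorm (X n - x) + hnorm (Y n - y)" for n
    by (metis add_diff_add hnorm_triangle)
  then show "\<forall>\<^sub>F n in sequentially. norm (hnorm (X n + Y n - (x + y))) \<le> hnorm (X n - x) + hnorm (Y n - y)"
    by simp
  show "(\<lambda>n. hnorm (X n - x) + hnorm (Y n - y)) \<longlonglongrightarrow> 0"
    using assms unfolding hconverges_def by (rule tendsto_add_zero)
qed

lemma hconverges_minus: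
  assumes "hconverges X (x::'h::chilbert)"
  shows "hconverges (\<lambda>n. - X n) (- x)"
  using assms unfolding hconverges_def by (simp add: hnorm_minus_commute add.commute)

lemma hconverges_diff:
  assumes "hconverges X (x::'h::chilbert)" and "hconverges Y y"
  shows "hconverges (\<lambda>n. X n - Y n) (x - y)"
  using hconverges_add[OF assms(1) hconverges_minus[OF assms(2)]] by simp

lemma hconverges_cinner_right:
  assumes "hconverges X (x::'h::chilbert)"
  shows "(\<lambda>n. cinner z (X n)) \<longlonglongrightarrow> cinner z x"
proof (rule LIM_zero_cancel, rule Lim_null_comparison)
  show "\<forall>\<^sub>F n in sequentially. norm (cinner z (X n) - cinner z x) \<le> hnorm z * hnorm (X n - x)"
    using cauchy_schwarz[of z] by (simp add: cinner_diff_right[symmetric])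
  show "(\<lambda>n. hnorm z * hnorm (X n - x)) \<longlonglongrightarrow> 0"
    using assms unfolding hconverges_def by (simp add: tendsto_mult_right_zero)
qed

lemma hcauchy_hconverges:
  assumes "\<forall>e>0. \<exists>N. \<forall>m\<ge>N. \<forall>n\<ge>N. Re (cinner (X m - X n) (X m - X n)) < e"
  shows "\<exists>x::'h::chilbert. hconverges X x"
proof -
  obtain x where x: "\<forall>e>0. \<exists>N. \<forall>n\<ge>N. Re (cinner (X n - x) (X n - x)) < e"
    using hcomplete[OF assms] by blast
  have "hconverges X x"
    unfolding hconverges_def
  proof (rule LIMSEQ_I)
    fix e :: real
    assume "0 < e"
    then obtain N where "\<forall>n\<ge>N. Re (cinner (X n - x) (X n - x)) < e\<^sup>2"
      using x by (meson zero_less_power)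
    then show "\<exists>N. \<forall>n\<ge>N. norm (hnorm (X n - x) - 0) < e"
      using hnorm_less_iff[OF \<open>0 < e\<close>] by auto
  qed
  then show ?thesis ..
qed

lemma cinner_orthonormal_sum:
  fixes \<Phi> :: "nat \<Rightarrow> 'h::chilbert"
  assumes orth: "\<And>j k. cinner (\<Phi> j) (\<Phi> k) = (if j = k then 1 else 0)" and "finite F"
  shows "cinner (\<Phi> j) (\<Sum>k\<in>F. hscale (c k) (\<Phi> k)) = (if j \<in> F then c j else (0::complex))"
  unfolding cinner_sum_right cinner_hscale_right orth using \<open>finite F\<close>
  by (simp add: if_distrib[of "\<lambda>t. c _ * t"] cong: if_cong)

lemma cinner_self_orthonormal_sum:
  fixes \<Phi> :: "nat \<Rightarrow> 'h::chilbert"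
  assumes orth: "\<And>j k. cinner (\<Phi> j) (\<Phi> k) = (if j = k then 1 else 0)" and "finite F"
  shows "Re (cinner (\<Sum>k\<in>F. hscale (c k) (\<Phi> k)) (\<Sum>k\<in>F. hscale (c k) (\<Phi> k))) = (\<Sum>k\<in>F. (cmod (c k))\<^sup>2)"
    (is "Re (cinner ?s ?s) = _")
proof -
  have "cinner ?s ?s = (\<Sum>k\<in>F. cnj (c k) * cinner (\<Phi> k) ?s)"
    unfolding cinner_sum_left cinner_hscale_left ..
  also have "\<dots> = (\<Sum>k\<in>F. complex_of_real ((cmod (c k))\<^sup>2))"
    using \<open>finite F\<close>
    by (intro sum.cong)
      (simp_all add: cinner_orthonormal_sum[OF orth] complex_norm_square mult.commute del: of_real_power)
  finally show ?thesis
    by simp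
qed

lemma orthonormal_partial_sums_cauchy:
  fixes \<Phi> :: "nat \<Rightarrow> 'h::chilbert"
  assumes orth: "\<And>j k. cinner (\<Phi> j) (\<Phi> k) = (if j = k then 1 else 0)"
    and summable: "summable (\<lambda>k. (cmod (c k))\<^sup>2)"
  defines "X \<equiv> \<lambda>m. \<Sum>k<m. hscale (c k) (\<Phi> k)"
  shows "\<forall>e>0. \<exists>N. \<forall>m\<ge>N. \<forall>n\<ge>N. Re (cinner (X m - X n) (X m - X n)) < e"
proof (intro allI impI)
  fix e :: real
  assume "e > 0"
  then obtain N where N: "\<forall>n\<ge>N. \<forall>m. norm (\<Sum>k=n..<m. (cmod (c k))\<^sup>2) < e"
    using summable unfolding summable_Cauchy by blast
  have X_diff: "X m - X n = (\<Sum>k\<in>{n..<m}. hscale (c k) (\<Phi> k))" if "n \<le> m" for m n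
  proof -
    have "{..<m} = {..<n} \<union> {n..<m}" "{..<n} \<inter> {n..<m} = {}"
      using that by auto
    then show ?thesis
      unfolding X_def by (simp add: sum.union_disjoint)
  qed
  have small: "Re (cinner (X m - X n) (X m - X n)) < e" if "N \<le> n" "n \<le> m" for m n
    using N that by (simp add: X_diff cinner_self_orthonormal_sum[OF orth] sum_nonneg)
  have "Re (cinner (X m - X n) (X m - X n)) < e" if "N \<le> m" "N \<le> n" for m n
  proof (cases "n \<le> m")
    case True
    then show ?thesis
      using small that by blast
  next
    case False
    then show ?thesis
      using small[of m n] that hnorm_minus_commute[of "X m" "X n"] by (simp add: hnorm_sq[symmetric])
  qed
  then show "\<exists>N. \<forall>m\<ge>N. \<forall>n\<ge>N. Re (cinner (X m - X n) (X m - X n)) < e"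
    by blast
qed

lemma riesz_fischer:
  fixes \<Phi> :: "nat \<Rightarrow> 'h::chilbert"
  assumes orth: "\<And>j k. cinner (\<Phi> j) (\<Phi> k) = (if j = k then 1 else 0)"
    and summable: "summable (\<lambda>k. (cmod (c k))\<^sup>2)"
  shows "\<exists>v. \<forall>k. cinner (\<Phi> k) v = c k"
proof -
  define X where "X m = (\<Sum>k<m. hscale (c k) (\<Phi> k))" for m
  have "\<exists>v. hconverges X v"
    using orthonormal_partial_sums_cauchy[OF orth summable] unfolding X_def[abs_def]
    by (rule hcauchy_hconverges)
  then obtain v where v: "hconverges X v" ..
  have "cinner (\<Phi> k) v = c k" for k
  proof (rule LIMSEQ_unique)
    show "(\<lambda>n. cinner (\<Phi> k) (X n)) \<longlonglongrightarrow> cinner (\<Phi> k) v"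
      using v by (rule hconverges_cinner_right)
    have "\<forall>\<^sub>F n in sequentially. cinner (\<Phi> k) (X n) = c k"
      unfolding eventually_sequentially
      by (rule exI[of _ "Suc k"]) (simp add: X_def cinner_orthonormal_sum[OF orth])
    then show "(\<lambda>n. cinner (\<Phi> k) (X n)) \<longlonglongrightarrow> c k"
      by (rule tendsto_eventually)
  qed
  then show ?thesis
    by blast
qed

subsection \<open>Closures of symmetric operators\<close>

lemma csubspace_diff:
  assumes "csubspace V" "x \<in> V" "y \<in> V"
  shows "x - y \<in> (V::'h::chilbert set)"
proof -
  have "x + hscale (- 1) y \<in> V"
    using assms unfolding csubspace_def by blast
  then show ?thesis
    by (simp add: hscale_minus_left hscale_one)
qed

lemma linear_op_diff:
  assumes "linear_op D A" "x \<in> D" "y \<in> D"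
  shows "A (x - y) = A x - A (y::'h::chilbert)"
proof -
  have "hscale (- 1) y \<in> D"
    using assms unfolding linear_op_def csubspace_def by blast
  then have "A (x + hscale (- 1) y) = A x + hscale (- 1) (A y)"
    using assms unfolding linear_op_def by simp
  then show ?thesis
    by (simp add: hscale_minus_left hscale_one)
qed

lemma linear_op_cong:
  assumes "\<And>x. x \<in> D \<Longrightarrow> T x = T' x"
  shows "linear_op D T \<longleftrightarrow> linear_op D T'"
  using assms unfolding linear_op_def csubspace_def by auto

lemma symmetric_op_cong:
  assumes "\<And>x. x \<in> D \<Longrightarrow> T x = T' x"
  shows "symmetric_op D T \<longleftrightarrow> symmetric_op D T'"
  using linear_op_cong[OF assms] assms unfolding symmetric_op_def by auto

lemma adj_dom_cong:
  assumes "\<And>x. x \<in> D \<Longrightarrow> T x = T' x"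
  shows "adj_dom D T = adj_dom D T'"
  using assms unfolding adj_dom_def by auto

lemma self_adjoint_cong:
  assumes "\<And>x. x \<in> D \<Longrightarrow> T x = T' x"
  shows "self_adjoint D T \<longleftrightarrow> self_adjoint D T'"
  unfolding self_adjoint_def using symmetric_op_cong[OF assms] adj_dom_cong[OF assms] by simp

lemma op_closure_map_eqI:
  assumes sym: "symmetric_op D (A::'h::chilbert \<Rightarrow> 'h)" and xy: "(x, y) \<in> op_closure_graph D A"
  shows "op_closure_map D A x = y"
  unfolding op_closure_map_def
proof (rule some_equality)
  show "(x, y) \<in> op_closure_graph D A"
    by (rule xy)
  fix y'
  assume "(x, y') \<in> op_closure_graph D A"
  then obtain X' where X': "\<forall>n. X' n \<in> D" "hconverges X' x" "hconverges (\<lambda>n. A (X' n)) y'"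
    unfolding op_closure_graph_def by auto
  obtain X where X: "\<forall>n. X n \<in> D" "hconverges X x" "hconverges (\<lambda>n. A (X n)) y"
    using xy unfolding op_closure_graph_def by auto
  have lin: "linear_op D A" and dense: "hdense D"
    and A_sym: "\<And>a b. a \<in> D \<Longrightarrow> b \<in> D \<Longrightarrow> cinner a (A b) = cinner (A a) b"
    using sym unfolding symmetric_op_def by auto
  txt \<open>\<open>X' n - X n \<rightarrow> 0\<close>, so symmetry makes \<open>y' - y\<close> orthogonal to the dense domain.\<close>
  define Z where "Z n = X' n - X n" for n
  have Z_dom: "Z n \<in> D" for n
    using csubspace_diff lin X(1) X'(1) unfolding Z_def linear_op_def by blast
  have Z_lim: "hconverges Z 0"
    using hconverges_diff[OF X'(2) X(2)] unfolding Z_def[abs_def] by simp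
  have AZ_lim: "hconverges (\<lambda>n. A (Z n)) (y' - y)"
    using hconverges_diff[OF X'(3) X(3)] linear_op_diff[OF lin] X(1) X'(1) unfolding Z_def by simp
  have "cinner z (y' - y) = 0" if "z \<in> D" for z
  proof (rule LIMSEQ_unique)
    show "(\<lambda>n. cinner z (A (Z n))) \<longlonglongrightarrow> cinner z (y' - y)"
      using AZ_lim by (rule hconverges_cinner_right)
    show "(\<lambda>n. cinner z (A (Z n))) \<longlonglongrightarrow> 0"
      using hconverges_cinner_right[OF Z_lim, of "A z"] A_sym[OF that Z_dom] by simp
  qed
  then have "y' - y = 0"
    by (rule hdense_orthogonal_eq_zero[OF dense])
  then show "y' = y"
    by simp
qed

subsection \<open>Perturbation by continuous symmetric operators\<close>

definition continuous_symmetric_op :: "('h::chilbert \<Rightarrow> 'h) \<Rightarrow> bool" where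
  "continuous_symmetric_op B \<longleftrightarrow>
     (\<forall>x y. B (x + y) = B x + B y) \<and> (\<forall>c x. B (hscale c x) = hscale c (B x)) \<and>
     (\<forall>x y. cinner x (B y) = cinner (B x) y) \<and>
     (\<forall>X x. hconverges X x \<longrightarrow> hconverges (\<lambda>n. B (X n)) (B x))"

lemma symmetric_op_add_continuous:
  assumes "symmetric_op D A" and "continuous_symmetric_op B"
  shows "symmetric_op D (\<lambda>x. A x + B x)"
  using assms
  unfolding symmetric_op_def linear_op_def continuous_symmetric_op_def
  by (simp add: hscale_add_right cinner_add_left cinner_add_right algebra_simps)

lemma adj_dom_add_continuous:
  assumes "continuous_symmetric_op B"
  shows "adj_dom D (\<lambda>x. A x + B x) = adj_dom D A"
proof -
  have B_sym: "cinner y (B x) = cinner (B y) x" for x y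
    using assms unfolding continuous_symmetric_op_def by blast
  have "(\<forall>x\<in>D. cinner y (A x + B x) = cinner z x) \<longleftrightarrow> (\<forall>x\<in>D. cinner y (A x) = cinner (z - B y) x)"
    for y z
    by (auto simp: cinner_add_right cinner_diff_left B_sym algebra_simps)
  then have "(\<exists>z. \<forall>x\<in>D. cinner y (A x + B x) = cinner z x) \<longleftrightarrow> (\<exists>z. \<forall>x\<in>D. cinner y (A x) = cinner z x)"
    for y
    by (metis add_diff_cancel)
  then show ?thesis
    unfolding adj_dom_def by simp
qed

lemma self_adjoint_add_continuous:
  assumes "self_adjoint D A" and "continuous_symmetric_op B"
  shows "self_adjoint D (\<lambda>x. A x + B x)"
  using assms symmetric_op_add_continuous adj_dom_add_continuous
  unfolding self_adjoint_def by metis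

lemma op_closure_graph_add_continuous:
  assumes "continuous_symmetric_op B"
  shows "(x, y) \<in> op_closure_graph D (\<lambda>x. A x + B x) \<longleftrightarrow> (x, y - B x) \<in> op_closure_graph D A"
proof -
  have B_lim: "hconverges (\<lambda>n. B (X n)) (B x)" if "hconverges X x" for X
    using assms that unfolding continuous_symmetric_op_def by blast
  show ?thesis
  proof
    assume "(x, y) \<in> op_closure_graph D (\<lambda>x. A x + B x)"
    then obtain X where X: "\<forall>n. X n \<in> D" "hconverges X x" "hconverges (\<lambda>n. A (X n) + B (X n)) y"
      unfolding op_closure_graph_def by auto
    have "hconverges (\<lambda>n. (A (X n) + B (X n)) - B (X n)) (y - B x)"
      using hconverges_diff[OF X(3) B_lim[OF X(2)]] .
    then show "(x, y - B x) \<in> op_closure_graph D A"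
      using X(1,2) unfolding op_closure_graph_def by auto
  next
    assume "(x, y - B x) \<in> op_closure_graph D A"
    then obtain X where X: "\<forall>n. X n \<in> D" "hconverges X x" "hconverges (\<lambda>n. A (X n)) (y - B x)"
      unfolding op_closure_graph_def by auto
    have "hconverges (\<lambda>n. A (X n) + B (X n)) (y - B x + B x)"
      using hconverges_add[OF X(3) B_lim[OF X(2)]] .
    then show "(x, y) \<in> op_closure_graph D (\<lambda>x. A x + B x)"
      using X(1,2) unfolding op_closure_graph_def by auto
  qed
qed

lemma op_closure_dom_add_continuous:
  assumes "continuous_symmetric_op B"
  shows "op_closure_dom D (\<lambda>x. A x + B x) = op_closure_dom D A"
proof -
  have "(\<exists>y. (x, y) \<in> op_closure_graph D (\<lambda>x. A x + B x)) \<longleftrightarrow> (\<exists>y. (x, y) \<in> op_closure_graph D A)"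
    for x
    unfolding op_closure_graph_add_continuous[OF assms]
  proof
    assume "\<exists>y. (x, y) \<in> op_closure_graph D A"
    then obtain y where "(x, (y + B x) - B x) \<in> op_closure_graph D A"
      by auto
    then show "\<exists>y. (x, y - B x) \<in> op_closure_graph D A" ..
  qed blast
  then show ?thesis
    unfolding op_closure_dom_def fst_eq_Domain by (simp add: set_eq_iff Domain_iff)
qed

lemma op_closure_map_add_continuous:
  assumes "symmetric_op D A" and "continuous_symmetric_op B" and "x \<in> op_closure_dom D A"
  shows "op_closure_map D (\<lambda>x. A x + B x) x = op_closure_map D A x + B x"
proof -
  obtain y where y: "(x, y) \<in> op_closure_graph D A"
    using assms(3) unfolding op_closure_dom_def by force
  then have "(x, y + B x) \<in> op_closure_graph D (\<lambda>x. A x + B x)"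
    using op_closure_graph_add_continuous[OF assms(2)] by simp
  then have "op_closure_map D (\<lambda>x. A x + B x) x = y + B x"
    by (rule op_closure_map_eqI[OF symmetric_op_add_continuous[OF assms(1,2)]])
  then show ?thesis
    using op_closure_map_eqI[OF assms(1) y] by simp
qed

lemma ess_self_adjoint_add_continuous:
  assumes ess: "ess_self_adjoint D A" and B: "continuous_symmetric_op B"
  shows "ess_self_adjoint D (\<lambda>x. A x + B x)"
proof -
  have sym: "symmetric_op D A"
    and closure_sa: "self_adjoint (op_closure_dom D A) (op_closure_map D A)"
    using ess unfolding ess_self_adjoint_def by auto
  have "self_adjoint (op_closure_dom D A) (\<lambda>x. op_closure_map D A x + B x)"
    by (rule self_adjoint_add_continuous[OF closure_sa B])
  then have "self_adjoint (op_closure_dom D A) (op_closure_map D (\<lambda>x. A x + B x))"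
    by (subst self_adjoint_cong[OF op_closure_map_add_continuous[OF sym B]])
  then show ?thesis
    using symmetric_op_add_continuous[OF sym B] op_closure_dom_add_continuous[OF B]
    unfolding ess_self_adjoint_def by simp
qed

definition rank_one_form :: "'h::chilbert \<Rightarrow> 'h \<Rightarrow> 'h \<Rightarrow> complex" where
  "rank_one_form v x y = cinner x v * cinner v y"

definition rank_one_op :: "real \<Rightarrow> 'h::chilbert \<Rightarrow> 'h \<Rightarrow> 'h" where
  "rank_one_op c v x = hscale (complex_of_real c * cinner v x) v"

lemma cinner_rank_one_op:
  "cinner x (rank_one_op c v y) = complex_of_real c * rank_one_form v x y"
  by (simp add: rank_one_op_def rank_one_form_def cinner_hscale_right mult_ac)

lemma hscale_rank_one_op:
  "hscale (complex_of_real u) (rank_one_op c v x) = rank_one_op (u * c) v x"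
  by (simp add: rank_one_op_def hscale_hscale mult.assoc)

lemma rank_one_op_diff: "rank_one_op c v x - rank_one_op c v y = rank_one_op c v (x - y)"
  by (simp add: rank_one_op_def cinner_diff_right right_diff_distrib hscale_diff_left)

lemma hnorm_rank_one_op_le: "hnorm (rank_one_op c v x) \<le> \<bar>c\<bar> * (hnorm v)\<^sup>2 * hnorm x"
proof -
  have "hnorm (rank_one_op c v x) = \<bar>c\<bar> * cmod (cinner v x) * hnorm v"
    by (simp add: rank_one_op_def hnorm_hscale norm_mult)
  also have "\<dots> \<le> \<bar>c\<bar> * (hnorm v * hnorm x) * hnorm v"
    by (intro mult_right_mono mult_left_mono cauchy_schwarz) simp_all
  finally show ?thesis
    by (simp add: power2_eq_square mult_ac)
qed

lemma continuous_symmetric_rank_one_op: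
  fixes v :: "'h::chilbert"
  shows "continuous_symmetric_op (rank_one_op c v)"
  unfolding continuous_symmetric_op_def
proof (intro conjI allI impI)
  show "rank_one_op c v (x + y) = rank_one_op c v x + rank_one_op c v y" for x y
    by (simp add: rank_one_op_def cinner_add_right distrib_left hscale_add_left)
  show "rank_one_op c v (hscale a x) = hscale a (rank_one_op c v x)" for a x
    by (simp add: rank_one_op_def cinner_hscale_right hscale_hscale mult.left_commute)
  show "cinner x (rank_one_op c v y) = cinner (rank_one_op c v x) y" for x y
    using cinner_commute[of v x]
    by (simp add: rank_one_op_def cinner_hscale_left cinner_hscale_right mult_ac)
  fix X :: "nat \<Rightarrow> 'h" and x :: 'h
  assume "hconverges X x"
  show "hconverges (\<lambda>n. rank_one_op c v (X n)) (rank_one_op c v x)"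
    unfolding hconverges_def rank_one_op_diff
  proof (rule Lim_null_comparison)
    show "\<forall>\<^sub>F n in sequentially. norm (hnorm (rank_one_op c v (X n - x))) \<le> \<bar>c\<bar> * (hnorm v)\<^sup>2 * hnorm (X n - x)"
      by (simp add: hnorm_rank_one_op_le)
    show "(\<lambda>n. \<bar>c\<bar> * (hnorm v)\<^sup>2 * hnorm (X n - x)) \<longlonglongrightarrow> 0"
      using \<open>hconverges X x\<close> unfolding hconverges_def by (rule tendsto_mult_right_zero)
  qed
qed

subsection \<open>Perturbing an approximating family by a rank-one form\<close>

lemma sesq_form_add_scaled:
  assumes "sesq_form V q" and "sesq_form V p"
  shows "sesq_form V (\<lambda>x y. q x y + c * p x y)"
  using assms unfolding sesq_form_def by (simp add: algebra_simps)

lemma sesq_form_rank_one_form: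
  assumes "csubspace V"
  shows "sesq_form V (rank_one_form v)"
  using assms unfolding sesq_form_def rank_one_form_def
  by (simp add: cinner_add_left cinner_add_right cinner_hscale_left cinner_hscale_right algebra_simps)

lemma cmod_rank_one_form_le: "cmod (rank_one_form v x y) \<le> (hnorm v)\<^sup>2 * (hnorm x * hnorm y)"
proof -
  have "cmod (rank_one_form v x y) \<le> (hnorm x * hnorm v) * (hnorm v * hnorm y)"
    unfolding rank_one_form_def norm_mult by (intro mult_mono cauchy_schwarz) simp_all
  then show ?thesis
    by (simp add: power2_eq_square mult_ac)
qed

lemma exists_rank_one_form_nonvanishing:
  assumes "orthonormal_basis (\<Phi> :: nat \<Rightarrow> 'h::chilbert)"
  shows "\<exists>v. \<forall>j l. rank_one_form v (\<Phi> j) (\<Phi> l) \<noteq> 0"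
proof -
  have orth: "\<And>j k. cinner (\<Phi> j) (\<Phi> k) = (if j = k then 1 else 0)"
    using assms unfolding orthonormal_basis_def by blast
  have "(cmod (complex_of_real ((1 / 2) ^ k)))\<^sup>2 = (1 / 4) ^ k" for k
    by (simp add: norm_power power2_eq_square power_mult_distrib[symmetric])
  then have "summable (\<lambda>k. (cmod (complex_of_real ((1 / 2) ^ k)))\<^sup>2)"
    by (simp add: summable_geometric)
  from riesz_fischer[OF orth this]
  obtain v where v: "\<And>k. cinner (\<Phi> k) v = complex_of_real ((1 / 2) ^ k)"
    by blast
  have "rank_one_form v (\<Phi> j) (\<Phi> l) \<noteq> 0" for j l
    using v[of j] v[of l] cinner_commute[of v "\<Phi> l"] by (simp add: rank_one_form_def)
  then show ?thesis
    by blast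
qed

lemma hnorm_le_plus_norm:
  assumes "0 \<le> Re (h0 x x)"
  shows "hnorm x \<le> plus_norm h0 x"
  unfolding plus_norm_def using assms by (simp add: real_le_rsqrt)

lemma h0_bounded_form_add_bounded:
  assumes h: "h0_bounded_form Hp h0 h" and p: "sesq_form Hp p" and K: "0 \<le> K"
    and p_bound: "\<And>x. x \<in> Hp \<Longrightarrow> cmod (p x x) \<le> K * (hnorm x)\<^sup>2"
  shows "h0_bounded_form Hp h0 (\<lambda>x y. h x y + c * p x y)"
proof -
  obtain a b where ab: "a \<ge> 0" "b \<ge> 0"
    and h_bound: "\<And>x. x \<in> Hp \<Longrightarrow> cmod (h x x) \<le> a * Re (h0 x x) + b * (hnorm x)\<^sup>2"
    using h unfolding h0_bounded_form_def by blast
  have "cmod (h x x + c * p x x) \<le> a * Re (h0 x x) + (b + cmod c * K) * (hnorm x)\<^sup>2"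
    if "x \<in> Hp" for x
  proof -
    have "cmod (h x x + c * p x x) \<le> cmod (h x x) + cmod c * cmod (p x x)"
      by (metis norm_mult norm_triangle_ineq)
    also have "\<dots> \<le> (a * Re (h0 x x) + b * (hnorm x)\<^sup>2) + cmod c * (K * (hnorm x)\<^sup>2)"
      using h_bound[OF that] p_bound[OF that] by (intro add_mono mult_left_mono) simp_all
    finally show ?thesis
      by (simp add: algebra_simps)
  qed
  moreover have "sesq_form Hp (\<lambda>x y. h x y + c * p x y)"
    using h p sesq_form_add_scaled unfolding h0_bounded_form_def by blast
  moreover have "0 \<le> b + cmod c * K"
    using ab K by simp
  ultimately show ?thesis
    unfolding h0_bounded_form_def using ab(1) by blast
qed

lemma relative_error_add_bounded_form_le:
  assumes h0_nonneg: "\<And>x. x \<in> Hp \<Longrightarrow> 0 \<le> Re (h0 x x)" and K: "0 \<le> K"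
    and p_bound: "cmod (p x y) \<le> K * (hnorm x * hnorm y)"
    and x: "x \<in> Hp - {0}" and y: "y \<in> Hp - {0}"
  shows "cmod (g x y - (h x y + complex_of_real t * p x y)) / (plus_norm h0 x * plus_norm h0 y)
    \<le> cmod (g x y - h x y) / (plus_norm h0 x * plus_norm h0 y) + \<bar>t\<bar> * K"
proof -
  define q where "q = plus_norm h0 x * plus_norm h0 y"
  have xy_le: "hnorm x * hnorm y \<le> q"
    unfolding q_def using x y h0_nonneg
    by (intro mult_mono hnorm_le_plus_norm) (auto intro: order_trans[OF hnorm_nonneg hnorm_le_plus_norm])
  have q_pos: "0 < q"
    using hnorm_pos x y xy_le by (metis DiffD2 singletonI mult_pos_pos order_less_le_trans)
  have "cmod (g x y - (h x y + complex_of_real t * p x y)) \<le> cmod (g x y - h x y) + \<bar>t\<bar> * cmod (p x y)"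
    by (metis diff_diff_eq norm_mult norm_of_real norm_triangle_ineq4)
  also have "\<bar>t\<bar> * cmod (p x y) \<le> \<bar>t\<bar> * K * q"
    using p_bound mult_left_mono[OF xy_le K] by (simp add: mult.assoc mult_left_mono)
  finally show ?thesis
    using q_pos unfolding q_def[symmetric] by (simp add: field_simps)
qed

lemma approximating_family_add_small_form:
  assumes approx: "approximating_family Hp h0 h1 hn"
    and h0_nonneg: "\<And>x. x \<in> Hp \<Longrightarrow> 0 \<le> Re (h0 x x)"
    and p: "sesq_form Hp p" and K: "0 \<le> K"
    and p_bound: "\<And>x y. x \<in> Hp \<Longrightarrow> y \<in> Hp \<Longrightarrow> cmod (p x y) \<le> K * (hnorm x * hnorm y)"
    and \<epsilon>: "\<epsilon> \<longlonglongrightarrow> 0"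
    and differs: "\<And>n. \<exists>x\<in>Hp. \<exists>y\<in>Hp. hn n x y + complex_of_real (\<epsilon> n) * p x y \<noteq> h1 x y"
  shows "approximating_family Hp h0 h1 (\<lambda>n x y. hn n x y + complex_of_real (\<epsilon> n) * p x y)"
  unfolding approximating_family_def
proof (intro conjI allI impI)
  fix n
  show "h0_bounded_form Hp h0 (\<lambda>x y. hn n x y + complex_of_real (\<epsilon> n) * p x y)"
    using approx p K p_bound
    by (intro h0_bounded_form_add_bounded) (auto simp: approximating_family_def power2_eq_square)
  show "\<exists>x\<in>Hp. \<exists>y\<in>Hp. hn n x y + complex_of_real (\<epsilon> n) * p x y \<noteq> h1 x y"
    by (rule differs)
next
  fix e :: real
  assume "e > 0"
  obtain N1 where N1: "\<And>n x y. n \<ge> N1 \<Longrightarrow> x \<in> Hp - {0} \<Longrightarrow> y \<in> Hp - {0} \<Longrightarrow>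
      cmod (h1 x y - hn n x y) / (plus_norm h0 x * plus_norm h0 y) \<le> e / 2"
    using approx \<open>e > 0\<close> unfolding approximating_family_def by (meson half_gt_zero)
  have "(\<lambda>n. \<bar>\<epsilon> n\<bar> * K) \<longlonglongrightarrow> 0"
    using tendsto_mult_left_zero[OF tendsto_rabs_zero[OF \<epsilon>]] .
  then obtain N2 where N2: "\<And>n. n \<ge> N2 \<Longrightarrow> \<bar>\<epsilon> n\<bar> * K < e / 2"
    using \<open>e > 0\<close> order_tendstoD(2)[of _ 0 sequentially "e / 2"]
    unfolding eventually_sequentially by (meson half_gt_zero)
  have "cmod (h1 x y - (hn n x y + complex_of_real (\<epsilon> n) * p x y)) / (plus_norm h0 x * plus_norm h0 y) \<le> e"
    if n: "max N1 N2 \<le> n" and x: "x \<in> Hp - {0}" and y: "y \<in> Hp - {0}" for n x y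
  proof -
    have "cmod (h1 x y - (hn n x y + complex_of_real (\<epsilon> n) * p x y)) / (plus_norm h0 x * plus_norm h0 y)
        \<le> cmod (h1 x y - hn n x y) / (plus_norm h0 x * plus_norm h0 y) + \<bar>\<epsilon> n\<bar> * K"
      using x y by (intro relative_error_add_bounded_form_le[OF h0_nonneg K _ x y] p_bound) auto
    then show ?thesis
      using N1[OF _ x y, of n] N2[of n] n by linarith
  qed
  then show "\<exists>N. \<forall>n\<ge>N. \<forall>x\<in>Hp - {0}. \<forall>y\<in>Hp - {0}.
      cmod (h1 x y - (hn n x y + complex_of_real (\<epsilon> n) * p x y)) / (plus_norm h0 x * plus_norm h0 y) \<le> e"
    by blast
qed

lemma exists_real_avoiding_countable_roots:
  fixes Z :: "(complex \<times> complex) set"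
  assumes "countable Z" and nontrivial: "\<And>a p. (a, p) \<in> Z \<Longrightarrow> a \<noteq> 0 \<or> p \<noteq> 0" and "0 < \<delta>"
  shows "\<exists>t. 0 < t \<and> t < \<delta> \<and> (\<forall>(a, p)\<in>Z. a + complex_of_real t * p \<noteq> 0)"
proof -
  define root where "root = (\<lambda>(a, p). Re (- a / p))"
  have root: "t \<in> root ` Z" if "(a, p) \<in> Z" and "a + complex_of_real t * p = 0" for t a p
  proof -
    have "p \<noteq> 0"
      using nontrivial[OF that(1)] that(2) by auto
    moreover have "complex_of_real t * p = - a"
      using that(2) by (simp only: add_eq_0_iff)
    ultimately have "complex_of_real t = - a / p"
      by (rule iffD2[OF nonzero_eq_divide_eq])
    then have "Re (complex_of_real t) = Re (- a / p)"
      by (rule arg_cong)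
    then have "t = root (a, p)"
      unfolding root_def by simp
    then show ?thesis
      by (rule image_eqI[OF _ that(1)])
  qed
  have "countable (root ` Z)"
    using \<open>countable Z\<close> by (rule countable_image)
  moreover have "uncountable {0<..<\<delta>}"
    using \<open>0 < \<delta>\<close> by (simp add: uncountable_open_interval)
  ultimately have "\<not> {0<..<\<delta>} \<subseteq> root ` Z"
    using countable_subset by blast
  then obtain t where t: "0 < t" "t < \<delta>" and "t \<notin> root ` Z"
    by (auto simp: subset_iff)
  then have "a + complex_of_real t * p \<noteq> 0" if "(a, p) \<in> Z" for a p
    using root[OF that] by blast
  then show ?thesis
    using t by blast
qed

lemma exists_vanishing_sequence_avoiding_roots:
  fixes Z :: "nat \<Rightarrow> (complex \<times> complex) set"
  assumes "\<And>n. countable (Z n)" and "\<And>n a p. (a, p) \<in> Z n \<Longrightarrow> a \<noteq> 0 \<or> p \<noteq> 0"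
  shows "\<exists>\<epsilon>. \<epsilon> \<longlonglongrightarrow> 0 \<and> (\<forall>n. \<forall>(a, p)\<in>Z n. a + complex_of_real (\<epsilon> n) * p \<noteq> 0)"
proof -
  have ex: "\<forall>n. \<exists>t. 0 < t \<and> t < inverse (real (Suc n)) \<and> (\<forall>(a, p)\<in>Z n. a + complex_of_real t * p \<noteq> 0)"
    using exists_real_avoiding_countable_roots assms by simp
  obtain \<epsilon> where \<epsilon>: "\<And>n. 0 < \<epsilon> n" "\<And>n. \<epsilon> n < inverse (real (Suc n))"
    "\<And>n. \<forall>(a, p)\<in>Z n. a + complex_of_real (\<epsilon> n) * p \<noteq> 0"
    using choice[OF ex] by blast
  have "\<epsilon> \<longlonglongrightarrow> 0"
  proof (rule real_tendsto_sandwich)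
    show "\<forall>\<^sub>F n in sequentially. 0 \<le> \<epsilon> n" "\<forall>\<^sub>F n in sequentially. \<epsilon> n \<le> inverse (real (Suc n))"
      using \<epsilon>(1,2) by (simp_all add: less_imp_le)
    show "(\<lambda>n. inverse (real (Suc n))) \<longlonglongrightarrow> 0"
      by (rule LIMSEQ_inverse_real_of_nat)
  qed simp
  then show ?thesis
    using \<epsilon>(3) by blast
qed

lemma exists_generic_weights:
  fixes hn :: "nat \<Rightarrow> 'a \<Rightarrow> 'a \<Rightarrow> complex" and p g :: "'a \<Rightarrow> 'a \<Rightarrow> complex"
    and \<Phi> :: "nat \<Rightarrow> 'a"
  assumes p_basis: "\<And>j l. p (\<Phi> j) (\<Phi> l) \<noteq> 0" and differs: "\<And>n. \<exists>x\<in>V. \<exists>y\<in>V. hn n x y \<noteq> g x y"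
  shows "\<exists>\<epsilon>. \<epsilon> \<longlonglongrightarrow> 0 \<and>
    (\<forall>n j l. hn n (\<Phi> j) (\<Phi> l) + complex_of_real (\<epsilon> n) * p (\<Phi> j) (\<Phi> l) \<noteq> 0) \<and>
    (\<forall>n. \<exists>x\<in>V. \<exists>y\<in>V. hn n x y + complex_of_real (\<epsilon> n) * p x y \<noteq> g x y)"
proof -
  obtain x0 y0 where xy0: "\<And>n. x0 n \<in> V" "\<And>n. y0 n \<in> V" "\<And>n. hn n (x0 n) (y0 n) \<noteq> g (x0 n) (y0 n)"
    using differs by metis
  define Z where "Z n = insert (hn n (x0 n) (y0 n) - g (x0 n) (y0 n), p (x0 n) (y0 n))
    ((\<lambda>(j, l). (hn n (\<Phi> j) (\<Phi> l), p (\<Phi> j) (\<Phi> l))) ` UNIV)" for n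
  have "countable (Z n)" for n
    unfolding Z_def by simp
  moreover have "a \<noteq> 0 \<or> q \<noteq> 0" if "(a, q) \<in> Z n" for n a q
    using that xy0(3) p_basis unfolding Z_def by auto
  ultimately obtain \<epsilon> where \<epsilon>: "\<epsilon> \<longlonglongrightarrow> 0" "\<And>n. \<forall>(a, q)\<in>Z n. a + complex_of_real (\<epsilon> n) * q \<noteq> 0"
    using exists_vanishing_sequence_avoiding_roots by metis
  have "hn n (\<Phi> j) (\<Phi> l) + complex_of_real (\<epsilon> n) * p (\<Phi> j) (\<Phi> l) \<noteq> 0" for n j l
  proof -
    have "(hn n (\<Phi> j) (\<Phi> l), p (\<Phi> j) (\<Phi> l)) \<in> Z n"
      unfolding Z_def by (rule insertI2, rule image_eqI[where x = "(j, l)"]) simp_all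
    then show ?thesis
      using \<epsilon>(2)[of n] by blast
  qed
  moreover have "hn n (x0 n) (y0 n) + complex_of_real (\<epsilon> n) * p (x0 n) (y0 n) \<noteq> g (x0 n) (y0 n)" for n
    using \<epsilon>(2)[of n] unfolding Z_def by (simp add: algebra_simps)
  ultimately show ?thesis
    using \<epsilon>(1) xy0(1,2) by blast
qed

lemma regular_family_add_rank_one:
  assumes "regular_family D0 T0 \<Phi> Hp r hn"
  shows "regular_family D0 T0 \<Phi> Hp r (\<lambda>n x y. hn n x y + complex_of_real (\<epsilon> n) * rank_one_form v x y)"
proof -
  obtain D T where sym: "\<And>n. symmetric_op (D n) (T n)" and dom: "\<And>n. D n \<subseteq> Hp"
    and form: "\<And>n x y. x \<in> Hp \<Longrightarrow> y \<in> D n \<Longrightarrow> hn n x y = cinner x (T n y)"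
    and basis: "\<And>n j. \<Phi> j \<in> D n"
    and ess: "\<And>n u. 0 \<le> u \<Longrightarrow> u < r \<Longrightarrow>
      ess_self_adjoint (cspan \<Phi>) (\<lambda>x. T0 x + hscale (complex_of_real u) (T n x))"
    using assms unfolding regular_family_def by blast
  define T' where "T' n x = T n x + rank_one_op (\<epsilon> n) v x" for n x
  have sym': "symmetric_op (D n) (T' n)" for n
    unfolding T'_def[abs_def] by (rule symmetric_op_add_continuous[OF sym continuous_symmetric_rank_one_op])
  have form': "hn n x y + complex_of_real (\<epsilon> n) * rank_one_form v x y = cinner x (T' n y)"
    if "x \<in> Hp" "y \<in> D n" for n x y
    using form[OF that] by (simp add: T'_def cinner_add_right cinner_rank_one_op)
  have ess': "ess_self_adjoint (cspan \<Phi>) (\<lambda>x. T0 x + hscale (complex_of_real u) (T' n x))"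
    if "0 \<le> u" "u < r" for n u
  proof -
    have "(\<lambda>x. T0 x + hscale (complex_of_real u) (T' n x)) =
        (\<lambda>x. (T0 x + hscale (complex_of_real u) (T n x)) + rank_one_op (u * \<epsilon> n) v x)"
      by (simp add: T'_def hscale_add_right hscale_rank_one_op add.assoc)
    then show ?thesis
      using ess_self_adjoint_add_continuous[OF ess[OF that] continuous_symmetric_rank_one_op] by simp
  qed
  show ?thesis
    unfolding regular_family_def
    by (intro exI[of _ D] exI[of _ T'] allI conjI ballI impI sym' dom basis form' ess') auto
qed

lemma connectedness_chain_mono:
  assumes "connectedness_chain \<Phi> g S" and "\<And>j l. g (\<Phi> j) (\<Phi> l) \<noteq> 0 \<Longrightarrow> g' (\<Phi> j) (\<Phi> l) \<noteq> 0"
  shows "connectedness_chain \<Phi> g' S"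
  unfolding connectedness_chain_def
proof (intro allI)
  fix j l
  obtain k q where "q 0 = j" "q (Suc k) = l"
    and "\<forall>i\<le>k. (q i, q (Suc i)) \<in> S \<and> g (\<Phi> (q i)) (\<Phi> (q (Suc i))) \<noteq> 0"
    using assms(1) unfolding connectedness_chain_def by blast
  then show "\<exists>k q. q 0 = j \<and> q (Suc k) = l \<and>
      (\<forall>i\<le>k. (q i, q (Suc i)) \<in> S \<and> g' (\<Phi> (q i)) (\<Phi> (q (Suc i))) \<noteq> 0)"
    using assms(2) by blast
qed

theorem lemma5p1:
  fixes D0 :: "'h::chilbert set" and T0 :: "'h \<Rightarrow> 'h" and \<Phi> :: "nat \<Rightarrow> 'h"
    and Hp :: "'h set" and h0 h1 :: "'h \<Rightarrow> 'h \<Rightarrow> complex" and r :: real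
    and S :: "(nat \<times> nat) set" and hn :: "nat \<Rightarrow> 'h \<Rightarrow> 'h \<Rightarrow> complex"
  assumes "form_bilinear_system D0 T0 \<Phi> Hp h0 h1 r"
    and "connectedness_chain \<Phi> h1 S"
    and "approximating_family Hp h0 h1 hn"
  shows "\<exists>ht. approximating_family Hp h0 h1 ht \<and>
           (\<forall>n. connectedness_chain \<Phi> (ht n) S) \<and>
           (regular_family D0 T0 \<Phi> Hp r hn \<longrightarrow> regular_family D0 T0 \<Phi> Hp r ht)"
proof -
  have onb: "orthonormal_basis \<Phi>" and h0: "closed_nonneg_form Hp h0"
    using assms(1) unfolding form_bilinear_system_def eigenbasis_def by blast+
  have h0_nonneg: "\<And>x. x \<in> Hp \<Longrightarrow> 0 \<le> Re (h0 x x)" and "csubspace Hp"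
    using h0 unfolding closed_nonneg_form_def hermitian_form_def sesq_form_def by blast+
  have differs: "\<And>n. \<exists>x\<in>Hp. \<exists>y\<in>Hp. hn n x y \<noteq> h1 x y"
    using assms(3) unfolding approximating_family_def by blast
  obtain v where "\<And>j l. rank_one_form v (\<Phi> j) (\<Phi> l) \<noteq> 0"
    using exists_rank_one_form_nonvanishing[OF onb] by blast
  from exists_generic_weights[of "rank_one_form v" \<Phi> Hp hn h1, OF this differs]
  obtain \<epsilon> where \<epsilon>: "\<epsilon> \<longlonglongrightarrow> 0"
    "\<And>n j l. hn n (\<Phi> j) (\<Phi> l) + complex_of_real (\<epsilon> n) * rank_one_form v (\<Phi> j) (\<Phi> l) \<noteq> 0"
    "\<And>n. \<exists>x\<in>Hp. \<exists>y\<in>Hp. hn n x y + complex_of_real (\<epsilon> n) * rank_one_form v x y \<noteq> h1 x y"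
    by blast
  define ht where "ht n x y = hn n x y + complex_of_real (\<epsilon> n) * rank_one_form v x y" for n x y
  have "approximating_family Hp h0 h1 ht"
    unfolding ht_def
    by (rule approximating_family_add_small_form[OF assms(3) h0_nonneg
          sesq_form_rank_one_form[OF \<open>csubspace Hp\<close>] _ cmod_rank_one_form_le \<epsilon>(1) \<epsilon>(3)])
      simp_all
  moreover have "connectedness_chain \<Phi> (ht n) S" for n
    unfolding ht_def by (rule connectedness_chain_mono[OF assms(2)]) (rule \<epsilon>(2))
  moreover have "regular_family D0 T0 \<Phi> Hp r hn \<longrightarrow> regular_family D0 T0 \<Phi> Hp r ht"
    unfolding ht_def using regular_family_add_rank_one by blast
  ultimately show ?thesis
    by blast
qed

end
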